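(* Let $\mathbb F$ be a field of characteristic $p>2$, let $m\ge 1$, and let $\mathfrak h_m$ be the Heisenberg Lie algebra over $\mathbb F$ with basis $e_1,\dots,e_{2m+1}$ and only nonzero brackets $[e_i,e_{m+i}]=-[e_{m+i},e_i]=e_{2m+1}$ for $1\le i\le m$. For $\lambda=(\lambda_1,\dots,\lambda_{2m+1})\in\mathbb F^{2m+1}$ let $\mathfrak h_m^\lambda$ denote $\mathfrak h_m$ with the restricted structure ($[p]$-operator) given by $\left(\sum_{i=1}^{2m+1}a_ie_i\right)^{[p]}=\left(\sum_{i=1}^{2m+1}a_i^p\lambda_i\right)e_{2m+1}$ (i.e. the unique $[p]$-operator with $e_i^{[p]}=\lambda_ie_{2m+1}$). Let $\lambda,\lambda'\in\mathbb F^{2m+1}$. Then $\mathfrak h_m^\lambda$ and $\mathfrak h_m^{\lambda'}$ are isomorphic as restricted Lie algebras if and only if there exist an invertible matrix $A=(a_{ij})\in\mathbb F^{2m\times 2m}$, a vector $k=(k_1,\dots,k_{2m})\in\mathbb F^{2m}$ and a scalar $\mu\in\mathbb F$ with $(\det A)^2=\mu^{2m}$ such that (1) $A\begin{pmatrix}0&I_m\\-I_m&0\end{pmatrix}A^{t}=\mu\begin{pmatrix}0&I_m\\-I_m&0\end{pmatrix}$; (2) $\mu\begin{pmatrix}\lambda_1\\ \vdots\\ \lambda_{2m}\end{pmatrix}=A^{[p]}\begin{pmatrix}\lambda'_1\\ \vdots\\ \lambda'_{2m}\end{pmatrix}+\lambda'_{2m+1}\begin{pmatrix}k_1^p\\ \vdots\\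 k_{2m}^p\end{pmatrix}$, where $A^{[p]}=(a_{ij}^p)$; (3) $\lambda_{2m+1}=\mu^{p-1}\lambda'_{2m+1}$.
   Context: A restricted Lie algebra isomorphism is a Lie algebra isomorphism $\Psi$ satisfying $\Psi(g^{[p]})=\Psi(g)^{[p]'}$ for all $g$. $I_m$ denotes the $m\times m$ identity matrix and $A^t$ the transpose of $A$. *)

theory Defs
  imports "Jordan_Normal_Form.Determinant"
begin

text \<open>Heisenberg Lie algebra h_m over a field, realised on column vectors of
  dimension 2m+1 (0-based indices: e_1..e_(2m+1) of the paper correspond to
  the unit vectors with index 0..2m; the centre is spanned by index 2m).\<close>

definition heis_bracket :: "nat \<Rightarrow> 'a::field vec \<Rightarrow> 'a vec \<Rightarrow> 'a vec" where
  "heis_bracket m v w = vec (2*m+1) (\<lambda>i. if i = 2*m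
      then (\<Sum>j<m. v $ j * w $ (m+j) - v $ (m+j) * w $ j) else 0)"

definition heis_pmap :: "nat \<Rightarrow> 'a::field vec \<Rightarrow> 'a vec \<Rightarrow> 'a vec" where
  "heis_pmap m lam v = vec (2*m+1) (\<lambda>i. if i = 2*m
      then (\<Sum>j<2*m+1. v $ j ^ CHAR('a) * lam $ j) else 0)"

definition restricted_heis_iso :: "nat \<Rightarrow> 'a::field vec \<Rightarrow> 'a vec \<Rightarrow> ('a vec \<Rightarrow> 'a vec) \<Rightarrow> bool" where
  "restricted_heis_iso m lam lam' \<Psi> \<longleftrightarrow>
     bij_betw \<Psi> (carrier_vec (2*m+1)) (carrier_vec (2*m+1)) \<and>
     (\<forall>v\<in>carrier_vec (2*m+1). \<forall>w\<in>carrier_vec (2*m+1). \<Psi> (v + w) = \<Psi> v + \<Psi> w) \<and>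
     (\<forall>c. \<forall>v\<in>carrier_vec (2*m+1). \<Psi> (c \<cdot>\<^sub>v v) = c \<cdot>\<^sub>v \<Psi> v) \<and>
     (\<forall>v\<in>carrier_vec (2*m+1). \<forall>w\<in>carrier_vec (2*m+1).
        \<Psi> (heis_bracket m v w) = heis_bracket m (\<Psi> v) (\<Psi> w)) \<and>
     (\<forall>v\<in>carrier_vec (2*m+1). \<Psi> (heis_pmap m lam v) = heis_pmap m lam' (\<Psi> v))"

definition restricted_heis_isomorphic :: "nat \<Rightarrow> 'a::field vec \<Rightarrow> 'a vec \<Rightarrow> bool" where
  "restricted_heis_isomorphic m lam lam' \<longleftrightarrow> (\<exists>\<Psi>. restricted_heis_iso m lam lam' \<Psi>)"

definition symp_J :: "nat \<Rightarrow> 'a::field mat" where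
  "symp_J m = four_block_mat (0\<^sub>m m m) (1\<^sub>m m) (- 1\<^sub>m m) (0\<^sub>m m m)"

end

theory Submission
  imports Defs "HOL-Computational_Algebra.Primes"
begin

text \<open>Write z = e_(2m+1) and split a vector as v = (x, c) with x in F^2m. Then
  [v, w] = (x^t J y) z and v^[p] = (x^[p] . (lam_1..lam_2m) + c^p lam_(2m+1)) z.
  A Lie isomorphism Psi maps the centre F z = F [e_1, e_(m+1)] onto itself, say Psi z = mu z
  with mu nonzero, and is described by Psi e_i = sum_j a_ij e_j + k_i z. Comparing
  Psi [e_i, e_j] = J_ij mu z with [Psi e_i, Psi e_j] gives A J A^t = mu J, hence
  (det A)^2 = mu^2m, and applying Psi to e_i^[p] = lam_i z gives conditions (2) and (3).
  Conversely, (A, k, mu) define a bijective linear map which preserves the bracket by (1);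
  since the Frobenius map x -> x^p is a ring homomorphism, (2) and (3), which say that it
  commutes with [p] on the basis, make it commute with [p] everywhere.\<close>

lemma semiring_hom_power_CHAR:
  assumes "prime CHAR('a::comm_semiring_1)"
  shows "semiring_hom (\<lambda>x::'a. x ^ CHAR('a))"
proof
  show "(x + y) ^ CHAR('a) = x ^ CHAR('a) + y ^ CHAR('a)" for x y :: 'a
    by (rule freshmans_dream[OF assms refl])
qed (use prime_gt_0_nat[OF assms] in \<open>auto simp: power_mult_distrib zero_power\<close>)

lemma (in semiring_hom) hom_scalar_prod:
  "dim_vec v = dim_vec w \<Longrightarrow> hom (v \<bullet> w) = vec\<^sub>h v \<bullet> vec\<^sub>h w"
  unfolding scalar_prod_def by (simp add: hom_distribs)

lemma row_map_mat: "i < dim_row A \<Longrightarrow> row (map_mat f A) i = map_vec f (row A i)"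
  by (intro eq_vecI) auto

lemma vec_first_unit_vec: "i < n \<Longrightarrow> n \<le> N \<Longrightarrow> vec_first (unit_vec N i) n = unit_vec n i"
  by (intro eq_vecI) (auto simp: vec_first_def unit_vec_def)

lemma vec_first_smult_unit_vec: "n < N \<Longrightarrow> vec_first (c \<cdot>\<^sub>v unit_vec N n) n = (0\<^sub>v n :: 'a::semiring_1 vec)"
  by (intro eq_vecI) (auto simp: vec_first_def)

lemma vec_first_add: "n \<le> dim_vec w \<Longrightarrow> vec_first (v + w) n = vec_first v n + vec_first w n"
  by (intro eq_vecI) (auto simp: vec_first_def)

lemma vec_first_smult: "n \<le> dim_vec v \<Longrightarrow> vec_first (c \<cdot>\<^sub>v v) n = c \<cdot>\<^sub>v vec_first v n"
  by (intro eq_vecI) (auto simp: vec_first_def)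

lemma eq_vec_first_lastI:
  assumes "dim_vec v = n+1" and "dim_vec w = n+1"
    and first: "vec_first v n = vec_first w n" and last: "v $ n = w $ n"
  shows "v = w"
proof (rule eq_vecI)
  fix i assume "i < dim_vec w"
  then consider "i < n" | "i = n"
    using assms(2) by fastforce
  then show "v $ i = w $ i"
  proof cases
    case 1
    then show ?thesis
      using arg_cong[OF first, of "\<lambda>u. u $ i"] by (simp add: vec_first_def)
  qed (use last in simp)
qed (use assms in simp)

lemma mult_mat_vec_zero: "A \<in> carrier_mat nr nc \<Longrightarrow> A *\<^sub>v 0\<^sub>v nc = (0\<^sub>v nr :: 'a::semiring_0 vec)"
  by (intro eq_vecI) auto

lemma smult_mat_mult_mat_vec:
  "v \<in> carrier_vec (dim_col A) \<Longrightarrow> (c \<cdot>\<^sub>m A) *\<^sub>v v = c \<cdot>\<^sub>v (A *\<^sub>v v :: 'a::comm_semiring_0 vec)"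
  by (intro eq_vecI) (auto simp: scalar_prod_def sum_distrib_left ac_simps)

lemma left_inverse_mult_mat_vec:
  assumes "A \<in> carrier_mat n n" and "B \<in> carrier_mat n n" and "B * A = 1\<^sub>m n"
    and "x \<in> carrier_vec n"
  shows "B *\<^sub>v (A *\<^sub>v x) = (x :: 'a::semiring_1 vec)"
proof -
  have "(B * A) *\<^sub>v x = B *\<^sub>v (A *\<^sub>v x)"
    by (rule assoc_mult_mat_vec) (use assms in auto)
  then show ?thesis
    using assms by simp
qed

lemma index_mult_mat_transpose_mat:
  assumes "A \<in> carrier_mat n k" and "M \<in> carrier_mat k k" and "i < n" and "j < n"
  shows "(A * M * transpose_mat A) $$ (i,j) = row A i \<bullet> (M *\<^sub>v row A j)"
proof -
  have "A * M * transpose_mat A = A * (M * transpose_mat A)"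
    using assms by (intro assoc_mult_mat) auto
  then show ?thesis
    using assms by (simp add: col_mult2[of _ k k _ n] mult_mat_vec_def)
qed

lemma scalar_prod_transpose_mult_mat_vec:
  fixes A :: "'a::comm_semiring_0 mat"
  assumes A: "A \<in> carrier_mat n k" and M: "M \<in> carrier_mat k k"
    and x: "x \<in> carrier_vec n" and y: "y \<in> carrier_vec n"
  shows "(transpose_mat A *\<^sub>v x) \<bullet> (M *\<^sub>v (transpose_mat A *\<^sub>v y)) =
    x \<bullet> ((A * M * transpose_mat A) *\<^sub>v y)"
proof -
  have "(A * M * transpose_mat A) *\<^sub>v y = (A * M) *\<^sub>v (transpose_mat A *\<^sub>v y)"
    using A M y by (intro assoc_mult_mat_vec) auto
  also have "\<dots> = A *\<^sub>v (M *\<^sub>v (transpose_mat A *\<^sub>v y))"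
    using A M y by (intro assoc_mult_mat_vec) auto
  finally have "(A * M * transpose_mat A) *\<^sub>v y = A *\<^sub>v (M *\<^sub>v (transpose_mat A *\<^sub>v y))" .
  then show ?thesis
    using A M x y by (simp add: transpose_vec_mult_scalar[of A n k])
qed

lemma det_non_zero_imp_invertible_mat:
  assumes A: "(A :: 'a::field mat) \<in> carrier_mat n n" and "det A \<noteq> 0"
  shows "invertible_mat A"
proof -
  have "A \<in> Units (ring_mat TYPE('a) n ())"
    by (rule det_non_zero_imp_unit[OF assms])
  then obtain B where "B \<in> carrier_mat n n" "B * A = 1\<^sub>m n" "A * B = 1\<^sub>m n"
    unfolding Units_def by (auto simp: ring_mat_simps)
  with A show ?thesis
    unfolding invertible_mat_def inverts_mat_def by auto
qed

lemma invertible_matE: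
  assumes "invertible_mat A" and A: "A \<in> carrier_mat n n"
  obtains B where "B \<in> carrier_mat n n" "A * B = 1\<^sub>m n" "B * A = 1\<^sub>m n"
proof -
  obtain B where AB: "A * B = 1\<^sub>m n" and BA: "B * A = 1\<^sub>m (dim_row B)"
    using assms unfolding invertible_mat_def inverts_mat_def by auto
  have "B \<in> carrier_mat n n"
    using arg_cong[OF AB, of dim_col] arg_cong[OF BA, of dim_col] A by auto
  with AB BA show thesis
    using that by auto
qed

section \<open>The symplectic matrix\<close>

lemma symp_J_carrier [simp]: "symp_J m \<in> carrier_mat (2*m) (2*m)"
  unfolding symp_J_def mult_2 by (rule four_block_carrier_mat) auto

lemma dim_symp_J [simp]: "dim_row (symp_J m) = 2*m" "dim_col (symp_J m) = 2*m"
  using symp_J_carrier by blast+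

lemma index_symp_J:
  "i < 2*m \<Longrightarrow> j < 2*m \<Longrightarrow>
     symp_J m $$ (i,j) = (if j = m + i then 1 else if i = m + j then -1 else 0)"
  unfolding symp_J_def by auto

lemma symp_J_mult_vec:
  assumes y: "y \<in> carrier_vec (2*m)"
  shows "symp_J m *\<^sub>v y = vec (2*m) (\<lambda>i. if i < m then y $ (m+i) else - y $ (i-m))"
proof (rule eq_vecI)
  fix i assume "i < dim_vec (vec (2*m) (\<lambda>i. if i < m then y $ (m+i) else - y $ (i-m)))"
  then have i: "i < 2*m" by simp
  have "(symp_J m *\<^sub>v y) $ i = (\<Sum>j<2*m. symp_J m $$ (i,j) * y $ j)"
    using i y by (simp add: scalar_prod_def atLeast0LessThan)
  also have "\<dots> = (\<Sum>j<2*m. if j = (if i < m then m + i else i - m)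
                            then (if i < m then y $ (m+i) else - y $ (i-m)) else 0)"
    using i by (intro sum.cong) (auto simp: index_symp_J)
  finally show "(symp_J m *\<^sub>v y) $ i = vec (2*m) (\<lambda>i. if i < m then y $ (m+i) else - y $ (i-m)) $ i"
    using i by auto
qed simp

lemma symp_J_symp_J_mult_vec:
  "y \<in> carrier_vec (2*m) \<Longrightarrow> symp_J m *\<^sub>v (symp_J m *\<^sub>v y) = - y"
  by (intro eq_vecI) (auto simp: symp_J_mult_vec)

lemma symp_J_mult_symp_J: "symp_J m * symp_J m = (-1) \<cdot>\<^sub>m 1\<^sub>m (2*m)"
proof (rule eq_matI)
  fix i j assume "i < dim_row ((-1) \<cdot>\<^sub>m 1\<^sub>m (2*m) :: 'a mat)" "j < dim_col ((-1) \<cdot>\<^sub>m 1\<^sub>m (2*m) :: 'a mat)"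
  then have i: "i < 2*m" and j: "j < 2*m" by auto
  have "(symp_J m * symp_J m) $$ (i,j) = ((symp_J m * symp_J m) *\<^sub>v unit_vec (2*m) j) $ i"
    using i j by simp
  also have "\<dots> = (symp_J m *\<^sub>v (symp_J m *\<^sub>v unit_vec (2*m) j)) $ i"
    by (subst assoc_mult_mat_vec) auto
  also have "\<dots> = - unit_vec (2*m) j $ i"
    by (simp add: symp_J_symp_J_mult_vec i)
  finally show "(symp_J m * symp_J m) $$ (i,j) = ((-1) \<cdot>\<^sub>m 1\<^sub>m (2*m) :: 'a mat) $$ (i,j)"
    using i j by simp
qed auto

lemma det_symp_J_nonzero: "det (symp_J m) \<noteq> 0"
proof -
  have "det (symp_J m) * det (symp_J m) = det (symp_J m * symp_J m)"
    by (simp add: det_mult[of _ "2*m"])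
  also have "\<dots> = 1"
    by (simp add: symp_J_mult_symp_J power_mult)
  finally show ?thesis by (metis mult_zero_left zero_neq_one)
qed

lemma det_sq_eq_if_symplectic_similitude:
  fixes A :: "'a::field mat"
  assumes A: "A \<in> carrier_mat (2*m) (2*m)"
    and sympl: "A * symp_J m * transpose_mat A = \<mu> \<cdot>\<^sub>m symp_J m"
  shows "(det A)^2 = \<mu>^(2*m)"
proof -
  have "det A * det A * det (symp_J m) = det (A * symp_J m * transpose_mat A)"
    using A by (simp add: det_mult[of _ "2*m"] det_transpose)
  also have "\<dots> = \<mu>^(2*m) * det (symp_J m)"
    by (simp add: sympl)
  moreover have "det (symp_J m :: 'a mat) \<noteq> 0"
    by (rule det_symp_J_nonzero)
  ultimately show ?thesis
    by (simp add: power2_eq_square)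
qed

(* The simplifier rewrites 2*m+1 to Suc (2*m), so rules whose left-hand side mentions
   heis_centre are applied by unfolding or simp only. *)
abbreviation heis_centre :: "nat \<Rightarrow> 'a::zero_neq_one vec" where
  "heis_centre m \<equiv> unit_vec (2*m+1) (2*m)"

lemma heis_bracket_eq:
  fixes v w :: "'a::field vec"
  shows "heis_bracket m v w =
    (vec_first v (2*m) \<bullet> (symp_J m *\<^sub>v vec_first w (2*m))) \<cdot>\<^sub>v heis_centre m"
proof -
  let ?x = "vec_first v (2*m)" and ?y = "vec_first w (2*m)"
  let ?g = "\<lambda>i. ?x $ i * (if i < m then ?y $ (m+i) else - ?y $ (i-m))"
  have "?x \<bullet> (symp_J m *\<^sub>v ?y) = (\<Sum>i\<in>{0..<m+m}. ?g i)"
    by (simp add: symp_J_mult_vec scalar_prod_def flip: mult_2)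
  also have "\<dots> = (\<Sum>i\<in>{0..<m}. ?g i) + (\<Sum>i\<in>{m..<m+m}. ?g i)"
    by (rule sum.atLeastLessThan_concat[symmetric]) auto
  also have "(\<Sum>i\<in>{m..<m+m}. ?g i) = (\<Sum>i\<in>{0..<m}. ?g (i+m))"
    using sum.shift_bounds_nat_ivl[of ?g 0 m m] by simp
  also have "(\<Sum>i\<in>{0..<m}. ?g i) + \<dots> = (\<Sum>i<m. ?g i + ?g (i+m))"
    by (simp only: sum.distrib atLeast0LessThan)
  also have "\<dots> = (\<Sum>j<m. v $ j * w $ (m+j) - v $ (m+j) * w $ j)"
    by (intro sum.cong) (auto simp: vec_first_def algebra_simps)
  finally show ?thesis
    unfolding heis_bracket_def by (intro eq_vecI) auto
qed

lemma heis_pmap_eq: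
  fixes lam v :: "'a::field vec"
  shows "heis_pmap m lam v =
    (map_vec (\<lambda>x. x ^ CHAR('a)) (vec_first v (2*m)) \<bullet> vec_first lam (2*m)
       + v $ (2*m) ^ CHAR('a) * lam $ (2*m)) \<cdot>\<^sub>v heis_centre m"
  unfolding heis_pmap_def
  by (intro eq_vecI) (auto simp: scalar_prod_def vec_first_def atLeast0LessThan)

lemma heis_bracket_unit_vec:
  assumes "i < 2*m" and "j < 2*m"
  shows "heis_bracket m (unit_vec (2*m+1) i) (unit_vec (2*m+1) j) =
    (symp_J m $$ (i,j) :: 'a::field) \<cdot>\<^sub>v heis_centre m"
proof -
  have "unit_vec (2*m) i \<bullet> (symp_J m *\<^sub>v unit_vec (2*m) j) = (symp_J m $$ (i,j) :: 'a)"
    using assms by (subst scalar_prod_left_unit[of _ "2*m"])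
      (auto intro: mult_mat_vec_carrier[OF symp_J_carrier])
  then show ?thesis
    using assms by (simp add: heis_bracket_eq vec_first_unit_vec)
qed

lemma heis_pmap_smult_unit_vec:
  fixes lam :: "'a::field vec"
  assumes "i < 2*m+1" and "CHAR('a) > 0"
  shows "heis_pmap m lam (c \<cdot>\<^sub>v unit_vec (2*m+1) i) = (c ^ CHAR('a) * lam $ i) \<cdot>\<^sub>v heis_centre m"
proof -
  have "(\<Sum>j<2*m+1. (c \<cdot>\<^sub>v unit_vec (2*m+1) i) $ j ^ CHAR('a) * lam $ j)
      = (\<Sum>j<2*m+1. if j = i then c ^ CHAR('a) * lam $ i else 0)"
    using assms by (intro sum.cong) (auto simp: zero_power)
  then show ?thesis
    using assms(1) unfolding heis_pmap_def by (intro eq_vecI) auto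
qed

section \<open>Restricted isomorphisms yield the data (A, k, mu)\<close>

(* Writing Psi e_i = sum_j a_ij e_j + k_i e_(2m+1), these are the paper's A = (a_ij) and k. *)
definition heis_iso_mat :: "nat \<Rightarrow> ('a::field vec \<Rightarrow> 'a vec) \<Rightarrow> 'a mat" where
  "heis_iso_mat m \<Psi> = mat (2*m) (2*m) (\<lambda>(i,j). \<Psi> (unit_vec (2*m+1) i) $ j)"

definition heis_iso_vec :: "nat \<Rightarrow> ('a::field vec \<Rightarrow> 'a vec) \<Rightarrow> 'a vec" where
  "heis_iso_vec m \<Psi> = vec (2*m) (\<lambda>i. \<Psi> (unit_vec (2*m+1) i) $ (2*m))"

lemma dim_heis_iso_mat [simp]:
  "dim_row (heis_iso_mat m \<Psi>) = 2*m" "dim_col (heis_iso_mat m \<Psi>) = 2*m"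
  unfolding heis_iso_mat_def by simp_all

lemma dim_heis_iso_vec [simp]: "dim_vec (heis_iso_vec m \<Psi>) = 2*m"
  unfolding heis_iso_vec_def by simp

lemma row_heis_iso_mat:
  "i < 2*m \<Longrightarrow> row (heis_iso_mat m \<Psi>) i = vec_first (\<Psi> (unit_vec (2*m+1) i)) (2*m)"
  unfolding heis_iso_mat_def vec_first_def by (intro eq_vecI) auto

lemma restricted_heis_iso_centre:
  fixes \<Psi> :: "'a::field vec \<Rightarrow> 'a vec"
  assumes iso: "restricted_heis_iso m lam lam' \<Psi>" and "m \<ge> 1"
  obtains \<nu> where "\<nu> \<noteq> 0" and "\<Psi> (heis_centre m) = \<nu> \<cdot>\<^sub>v heis_centre m"
proof -
  let ?z = "heis_centre m :: 'a vec" and ?e = "\<lambda>i. unit_vec (2*m+1) i :: 'a vec"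
  have "?z = heis_bracket m (?e 0) (?e m)"
    using \<open>m \<ge> 1\<close> by (subst heis_bracket_unit_vec) (auto simp: index_symp_J)
  then have "\<Psi> ?z = heis_bracket m (\<Psi> (?e 0)) (\<Psi> (?e m))"
    using iso unfolding restricted_heis_iso_def by simp
  then obtain \<nu> where \<Psi>z: "\<Psi> ?z = \<nu> \<cdot>\<^sub>v ?z"
    by (simp add: heis_bracket_eq)
  have "\<nu> \<noteq> 0"
  proof
    assume "\<nu> = 0"
    have inj: "inj_on \<Psi> (carrier_vec (2*m+1))"
      using iso unfolding restricted_heis_iso_def bij_betw_def by blast
    have "\<Psi> (0 \<cdot>\<^sub>v ?z) = 0 \<cdot>\<^sub>v (\<nu> \<cdot>\<^sub>v ?z)"
      using iso \<Psi>z unfolding restricted_heis_iso_def by simp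
    also have "\<dots> = \<Psi> ?z"
      using \<Psi>z \<open>\<nu> = 0\<close> by (simp add: smult_smult_assoc)
    finally have "0 \<cdot>\<^sub>v ?z = ?z"
      by (rule inj_onD[OF inj]) simp_all
    then have "(0 \<cdot>\<^sub>v ?z) $ (2*m) = ?z $ (2*m)"
      by simp
    then show False
      by simp
  qed
  with \<Psi>z show thesis
    using that by blast
qed

lemma restricted_heis_iso_symplectic:
  fixes \<Psi> :: "'a::field vec \<Rightarrow> 'a vec"
  assumes iso: "restricted_heis_iso m lam lam' \<Psi>"
    and \<Psi>z: "\<Psi> (heis_centre m) = \<nu> \<cdot>\<^sub>v heis_centre m"
  shows "heis_iso_mat m \<Psi> * symp_J m * transpose_mat (heis_iso_mat m \<Psi>) = \<nu> \<cdot>\<^sub>m symp_J m"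
proof (rule eq_matI)
  fix i j assume "i < dim_row (\<nu> \<cdot>\<^sub>m symp_J m)" and "j < dim_col (\<nu> \<cdot>\<^sub>m symp_J m)"
  then have i: "i < 2*m" and j: "j < 2*m" by auto
  let ?A = "heis_iso_mat m \<Psi>" and ?e = "\<lambda>i. unit_vec (2*m+1) i :: 'a vec"
  have "(?A * symp_J m * transpose_mat ?A) $$ (i,j) = row ?A i \<bullet> (symp_J m *\<^sub>v row ?A j)"
    using i j by (intro index_mult_mat_transpose_mat) auto
  also have "\<dots> = heis_bracket m (\<Psi> (?e i)) (\<Psi> (?e j)) $ (2*m)"
    using i j by (simp add: heis_bracket_eq row_heis_iso_mat)
  also have "\<dots> = \<Psi> (heis_bracket m (?e i) (?e j)) $ (2*m)"
    using iso unfolding restricted_heis_iso_def by simp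
  also have "\<dots> = \<Psi> (symp_J m $$ (i,j) \<cdot>\<^sub>v heis_centre m) $ (2*m)"
    by (simp only: heis_bracket_unit_vec[OF i j])
  also have "\<dots> = \<nu> * symp_J m $$ (i,j)"
    using iso \<Psi>z unfolding restricted_heis_iso_def by simp
  finally show "(?A * symp_J m * transpose_mat ?A) $$ (i,j) = (\<nu> \<cdot>\<^sub>m symp_J m) $$ (i,j)"
    using i j by simp
qed auto

lemma restricted_heis_iso_pmap_first:
  fixes \<Psi> :: "'a::field vec \<Rightarrow> 'a vec"
  assumes iso: "restricted_heis_iso m lam lam' \<Psi>" and p: "CHAR('a) > 0"
    and \<Psi>z: "\<Psi> (heis_centre m) = \<nu> \<cdot>\<^sub>v heis_centre m"
  shows "\<nu> \<cdot>\<^sub>v vec_first lam (2*m) =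
    map_mat (\<lambda>x. x ^ CHAR('a)) (heis_iso_mat m \<Psi>) *\<^sub>v vec_first lam' (2*m)
      + lam' $ (2*m) \<cdot>\<^sub>v map_vec (\<lambda>x. x ^ CHAR('a)) (heis_iso_vec m \<Psi>)"
proof (rule eq_vecI)
  fix i assume "i < dim_vec (map_mat (\<lambda>x. x ^ CHAR('a)) (heis_iso_mat m \<Psi>) *\<^sub>v vec_first lam' (2*m)
      + lam' $ (2*m) \<cdot>\<^sub>v map_vec (\<lambda>x. x ^ CHAR('a)) (heis_iso_vec m \<Psi>))"
  then have i: "i < 2*m" by simp
  let ?e = "unit_vec (2*m+1) i :: 'a vec"
  have "heis_pmap m lam ?e = lam $ i \<cdot>\<^sub>v heis_centre m"
    using heis_pmap_smult_unit_vec[where c=1 and lam=lam] i p by simp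
  then have "\<nu> * lam $ i = \<Psi> (heis_pmap m lam ?e) $ (2*m)"
    using iso \<Psi>z unfolding restricted_heis_iso_def by simp
  also have "\<dots> = heis_pmap m lam' (\<Psi> ?e) $ (2*m)"
    using iso unfolding restricted_heis_iso_def by simp
  also have "\<dots> = map_vec (\<lambda>x. x ^ CHAR('a)) (row (heis_iso_mat m \<Psi>) i) \<bullet> vec_first lam' (2*m)
      + lam' $ (2*m) * heis_iso_vec m \<Psi> $ i ^ CHAR('a)"
    using i by (simp add: heis_pmap_eq row_heis_iso_mat heis_iso_vec_def)
  finally show "(\<nu> \<cdot>\<^sub>v vec_first lam (2*m)) $ i = (map_mat (\<lambda>x. x ^ CHAR('a)) (heis_iso_mat m \<Psi>)
      *\<^sub>v vec_first lam' (2*m) + lam' $ (2*m) \<cdot>\<^sub>v map_vec (\<lambda>x. x ^ CHAR('a)) (heis_iso_vec m \<Psi>)) $ i"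
    using i by (simp add: vec_first_def row_map_mat)
qed simp

lemma restricted_heis_iso_pmap_last:
  fixes \<Psi> :: "'a::field vec \<Rightarrow> 'a vec"
  assumes iso: "restricted_heis_iso m lam lam' \<Psi>" and p: "CHAR('a) > 0"
    and "\<nu> \<noteq> 0" and \<Psi>z: "\<Psi> (heis_centre m) = \<nu> \<cdot>\<^sub>v heis_centre m"
  shows "lam $ (2*m) = \<nu> ^ (CHAR('a) - 1) * lam' $ (2*m)"
proof -
  have "heis_pmap m lam (heis_centre m) = lam $ (2*m) \<cdot>\<^sub>v heis_centre m"
    using heis_pmap_smult_unit_vec[where i="2*m" and c=1 and lam=lam] p by simp
  then have "lam $ (2*m) * \<nu> = \<Psi> (heis_pmap m lam (heis_centre m)) $ (2*m)"
    using iso \<Psi>z unfolding restricted_heis_iso_def by simp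
  also have "\<dots> = heis_pmap m lam' (\<nu> \<cdot>\<^sub>v heis_centre m) $ (2*m)"
    using iso \<Psi>z unfolding restricted_heis_iso_def by simp
  also have "\<dots> = \<nu> ^ CHAR('a) * lam' $ (2*m)"
    using heis_pmap_smult_unit_vec[where i="2*m" and c=\<nu> and lam=lam'] p by simp
  also have "\<dots> = (\<nu> ^ (CHAR('a) - 1) * lam' $ (2*m)) * \<nu>"
    using p by (simp add: power_eq_if)
  finally show ?thesis
    using \<open>\<nu> \<noteq> 0\<close> by simp
qed

lemma restricted_heis_iso_imp_conditions:
  fixes \<Psi> :: "'a::field vec \<Rightarrow> 'a vec"
  assumes p: "CHAR('a) > 0" and m: "m \<ge> 1" and iso: "restricted_heis_iso m lam lam' \<Psi>"
  shows "\<exists>A k (\<mu>::'a). A \<in> carrier_mat (2*m) (2*m) \<and> invertible_mat A \<and>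
       k \<in> carrier_vec (2*m) \<and> (det A)^2 = \<mu>^(2*m) \<and>
       A * symp_J m * transpose_mat A = \<mu> \<cdot>\<^sub>m symp_J m \<and>
       \<mu> \<cdot>\<^sub>v vec_first lam (2*m) =
         map_mat (\<lambda>x. x ^ CHAR('a)) A *\<^sub>v vec_first lam' (2*m)
         + lam' $ (2*m) \<cdot>\<^sub>v map_vec (\<lambda>x. x ^ CHAR('a)) k \<and>
       lam $ (2*m) = \<mu> ^ (CHAR('a) - 1) * lam' $ (2*m)"
proof -
  obtain \<nu> where "\<nu> \<noteq> 0" and \<Psi>z: "\<Psi> (heis_centre m) = \<nu> \<cdot>\<^sub>v heis_centre m"
    using restricted_heis_iso_centre[OF iso m] by blast
  let ?A = "heis_iso_mat m \<Psi>"
  have A: "?A \<in> carrier_mat (2*m) (2*m)"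
    by (simp add: carrier_matI)
  have sympl: "?A * symp_J m * transpose_mat ?A = \<nu> \<cdot>\<^sub>m symp_J m"
    by (rule restricted_heis_iso_symplectic[OF iso \<Psi>z])
  have det: "(det ?A)^2 = \<nu>^(2*m)"
    by (rule det_sq_eq_if_symplectic_similitude[OF A sympl])
  then have "invertible_mat ?A"
    using \<open>\<nu> \<noteq> 0\<close> by (intro det_non_zero_imp_invertible_mat[OF A]) auto
  moreover have "heis_iso_vec m \<Psi> \<in> carrier_vec (2*m)"
    by (simp add: carrier_vecI)
  ultimately show ?thesis
    using A det sympl restricted_heis_iso_pmap_first[OF iso p \<Psi>z]
      restricted_heis_iso_pmap_last[OF iso p \<open>\<nu> \<noteq> 0\<close> \<Psi>z]
    by blast
qed

section \<open>The data (A, k, mu) yield restricted isomorphisms\<close>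

(* The converse construction: e_i is sent to sum_j a_ij e_j + k_i e_(2m+1) for i < 2m,
   and e_(2m+1) to mu e_(2m+1). *)
definition heis_map :: "nat \<Rightarrow> 'a::field mat \<Rightarrow> 'a vec \<Rightarrow> 'a \<Rightarrow> 'a vec \<Rightarrow> 'a vec" where
  "heis_map m A k \<mu> v = vec (2*m+1) (\<lambda>i. if i < 2*m
     then (transpose_mat A *\<^sub>v vec_first v (2*m)) $ i
     else k \<bullet> vec_first v (2*m) + \<mu> * v $ (2*m))"

lemma dim_heis_map [simp]: "dim_vec (heis_map m A k \<mu> v) = 2*m+1"
  unfolding heis_map_def by simp

lemma heis_map_carrier: "heis_map m A k \<mu> v \<in> carrier_vec (2*m+1)"
  unfolding heis_map_def by simp

lemma vec_first_heis_map [simp]: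
  "A \<in> carrier_mat (2*m) (2*m) \<Longrightarrow>
    vec_first (heis_map m A k \<mu> v) (2*m) = transpose_mat A *\<^sub>v vec_first v (2*m)"
  unfolding heis_map_def by (intro eq_vecI) (auto simp: vec_first_def)

lemma heis_map_last [simp]:
  "heis_map m A k \<mu> v $ (2*m) = k \<bullet> vec_first v (2*m) + \<mu> * v $ (2*m)"
  unfolding heis_map_def by simp

lemma heis_map_smult_centre:
  assumes A: "A \<in> carrier_mat (2*m) (2*m)" and k: "k \<in> carrier_vec (2*m)"
  shows "heis_map m A k \<mu> (c \<cdot>\<^sub>v heis_centre m) = (\<mu> * c) \<cdot>\<^sub>v heis_centre m"
proof (rule eq_vec_first_lastI)
  show "vec_first (heis_map m A k \<mu> (c \<cdot>\<^sub>v heis_centre m)) (2*m) =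
      vec_first ((\<mu> * c) \<cdot>\<^sub>v heis_centre m) (2*m)"
    using A by (simp add: vec_first_smult_unit_vec mult_mat_vec_zero[of _ "2*m" "2*m"])
  show "heis_map m A k \<mu> (c \<cdot>\<^sub>v heis_centre m) $ (2*m) = ((\<mu> * c) \<cdot>\<^sub>v heis_centre m) $ (2*m)"
    using k by (simp only: heis_map_last vec_first_smult_unit_vec) simp
qed simp_all

lemma heis_map_add:
  assumes A: "A \<in> carrier_mat (2*m) (2*m)" and k: "k \<in> carrier_vec (2*m)"
    and v: "v \<in> carrier_vec (2*m+1)" and w: "w \<in> carrier_vec (2*m+1)"
  shows "heis_map m A k \<mu> (v + w) = heis_map m A k \<mu> v + heis_map m A k \<mu> w"
proof (rule eq_vec_first_lastI)
  show "vec_first (heis_map m A k \<mu> (v + w)) (2*m) =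
      vec_first (heis_map m A k \<mu> v + heis_map m A k \<mu> w) (2*m)"
    using A v w by (simp add: vec_first_add mult_add_distrib_mat_vec[of _ "2*m" "2*m"])
  show "heis_map m A k \<mu> (v + w) $ (2*m) = (heis_map m A k \<mu> v + heis_map m A k \<mu> w) $ (2*m)"
    using k v w by (simp add: vec_first_add scalar_prod_add_distrib[of _ "2*m"] distrib_left)
qed (use v w in simp_all)

lemma heis_map_smult:
  assumes A: "A \<in> carrier_mat (2*m) (2*m)" and k: "k \<in> carrier_vec (2*m)"
    and v: "v \<in> carrier_vec (2*m+1)"
  shows "heis_map m A k \<mu> (c \<cdot>\<^sub>v v) = c \<cdot>\<^sub>v heis_map m A k \<mu> v"
proof (rule eq_vec_first_lastI)
  show "vec_first (heis_map m A k \<mu> (c \<cdot>\<^sub>v v)) (2*m) = vec_first (c \<cdot>\<^sub>v heis_map m A k \<mu> v) (2*m)"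
    using A v by (simp add: vec_first_smult mult_mat_vec[of _ "2*m" "2*m"])
  show "heis_map m A k \<mu> (c \<cdot>\<^sub>v v) $ (2*m) = (c \<cdot>\<^sub>v heis_map m A k \<mu> v) $ (2*m)"
    using k v by (simp add: vec_first_smult distrib_left mult.left_commute)
qed (use v in simp_all)

lemma heis_map_heis_bracket:
  assumes A: "A \<in> carrier_mat (2*m) (2*m)" and k: "k \<in> carrier_vec (2*m)"
    and sympl: "A * symp_J m * transpose_mat A = \<mu> \<cdot>\<^sub>m symp_J m"
  shows "heis_map m A k \<mu> (heis_bracket m v w) =
    heis_bracket m (heis_map m A k \<mu> v) (heis_map m A k \<mu> w)"
proof -
  let ?x = "vec_first v (2*m)" and ?y = "vec_first w (2*m)"
  have "(transpose_mat A *\<^sub>v ?x) \<bullet> (symp_J m *\<^sub>v (transpose_mat A *\<^sub>v ?y))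
      = ?x \<bullet> ((\<mu> \<cdot>\<^sub>m symp_J m) *\<^sub>v ?y)"
    using A by (simp add: scalar_prod_transpose_mult_mat_vec[of _ "2*m" "2*m"] sympl)
  also have "\<dots> = \<mu> * (?x \<bullet> (symp_J m *\<^sub>v ?y))"
    by (simp add: smult_mat_mult_mat_vec)
  finally have "(transpose_mat A *\<^sub>v ?x) \<bullet> (symp_J m *\<^sub>v (transpose_mat A *\<^sub>v ?y))
      = \<mu> * (?x \<bullet> (symp_J m *\<^sub>v ?y))" .
  then show ?thesis
    unfolding heis_bracket_eq heis_map_smult_centre[OF A k] using A by simp
qed

lemma inj_on_heis_map:
  assumes A: "A \<in> carrier_mat (2*m) (2*m)" and B: "B \<in> carrier_mat (2*m) (2*m)"
    and AB: "A * B = 1\<^sub>m (2*m)" and "\<mu> \<noteq> 0"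
  shows "inj_on (heis_map m A k \<mu>) (carrier_vec (2*m+1))"
proof (rule inj_onI)
  fix v w :: "'a vec" assume v: "v \<in> carrier_vec (2*m+1)" and w: "w \<in> carrier_vec (2*m+1)"
  assume eq: "heis_map m A k \<mu> v = heis_map m A k \<mu> w"
  have "transpose_mat B * transpose_mat A = 1\<^sub>m (2*m)"
    using transpose_mult[OF A B] AB by simp
  then have cancel: "transpose_mat B *\<^sub>v (transpose_mat A *\<^sub>v x) = x" if "x \<in> carrier_vec (2*m)" for x
    using A B that by (intro left_inverse_mult_mat_vec) auto
  have "transpose_mat A *\<^sub>v vec_first v (2*m) = transpose_mat A *\<^sub>v vec_first w (2*m)"
    using arg_cong[OF eq, of "\<lambda>u. vec_first u (2*m)"] A by simp
  then have "transpose_mat B *\<^sub>v (transpose_mat A *\<^sub>v vec_first v (2*m)) =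
      transpose_mat B *\<^sub>v (transpose_mat A *\<^sub>v vec_first w (2*m))"
    by simp
  then have first: "vec_first v (2*m) = vec_first w (2*m)"
    by (simp add: cancel)
  moreover have "v $ (2*m) = w $ (2*m)"
    using arg_cong[OF eq, of "\<lambda>u. u $ (2*m)"] first \<open>\<mu> \<noteq> 0\<close> by simp
  ultimately show "v = w"
    by (rule eq_vec_first_lastI[rotated 2]) (use v w in simp_all)
qed

lemma heis_map_image:
  assumes A: "A \<in> carrier_mat (2*m) (2*m)" and B: "B \<in> carrier_mat (2*m) (2*m)"
    and BA: "B * A = 1\<^sub>m (2*m)" and "\<mu> \<noteq> 0"
  shows "heis_map m A k \<mu> ` carrier_vec (2*m+1) = carrier_vec (2*m+1)"
proof
  show "heis_map m A k \<mu> ` carrier_vec (2*m+1) \<subseteq> carrier_vec (2*m+1)"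
    using heis_map_carrier by blast
  show "carrier_vec (2*m+1) \<subseteq> heis_map m A k \<mu> ` carrier_vec (2*m+1)"
  proof
    fix w :: "'a vec" assume w: "w \<in> carrier_vec (2*m+1)"
    define y where "y = transpose_mat B *\<^sub>v vec_first w (2*m)"
    define v where "v = vec (2*m+1) (\<lambda>i. if i < 2*m then y $ i else (w $ (2*m) - k \<bullet> y) / \<mu>)"
    have vy: "vec_first v (2*m) = y"
      using B unfolding v_def y_def vec_first_def by (intro eq_vecI) auto
    have "transpose_mat A * transpose_mat B = 1\<^sub>m (2*m)"
      using transpose_mult[OF B A] BA by simp
    then have "transpose_mat A *\<^sub>v y = vec_first w (2*m)"
      unfolding y_def using A B by (intro left_inverse_mult_mat_vec) auto
    have v_last: "v $ (2*m) = (w $ (2*m) - k \<bullet> y) / \<mu>"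
      by (simp add: v_def)
    have "heis_map m A k \<mu> v = w"
    proof (rule eq_vec_first_lastI)
      show "vec_first (heis_map m A k \<mu> v) (2*m) = vec_first w (2*m)"
        using A \<open>transpose_mat A *\<^sub>v y = vec_first w (2*m)\<close> by (simp add: vy)
      show "heis_map m A k \<mu> v $ (2*m) = w $ (2*m)"
        using \<open>\<mu> \<noteq> 0\<close> by (simp add: vy v_last)
    qed (use w in simp_all)
    moreover have "v \<in> carrier_vec (2*m+1)"
      by (simp add: v_def)
    ultimately show "w \<in> heis_map m A k \<mu> ` carrier_vec (2*m+1)"
      by blast
  qed
qed

lemma heis_map_heis_pmap:
  fixes lam lam' :: "'a::field vec"
  assumes p: "prime CHAR('a)"
    and A: "A \<in> carrier_mat (2*m) (2*m)" and k: "k \<in> carrier_vec (2*m)"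
    and lam_first: "\<mu> \<cdot>\<^sub>v vec_first lam (2*m) =
      map_mat (\<lambda>x. x ^ CHAR('a)) A *\<^sub>v vec_first lam' (2*m)
        + lam' $ (2*m) \<cdot>\<^sub>v map_vec (\<lambda>x. x ^ CHAR('a)) k"
    and lam_last: "lam $ (2*m) = \<mu> ^ (CHAR('a) - 1) * lam' $ (2*m)"
  shows "heis_map m A k \<mu> (heis_pmap m lam v) = heis_pmap m lam' (heis_map m A k \<mu> v)"
proof -
  interpret frob: semiring_hom "\<lambda>x::'a. x ^ CHAR('a)"
    by (rule semiring_hom_power_CHAR[OF p])
  let ?p = "CHAR('a)"
  let ?f = "map_vec (\<lambda>x::'a. x ^ ?p)" and ?F = "map_mat (\<lambda>x::'a. x ^ ?p)"
  (* Naming the coordinates keeps algebra_simps from turning 2*m into m*2 inside them. *)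
  define x c l l' a a' where "x = vec_first v (2*m)" and "c = v $ (2*m)"
    and "l = vec_first lam (2*m)" and "l' = vec_first lam' (2*m)"
    and "a = lam $ (2*m)" and "a' = lam' $ (2*m)"
  have fx: "?f x \<in> carrier_vec (2*m)" and Fl: "?F A *\<^sub>v l' \<in> carrier_vec (2*m)"
    and fk: "?f k \<in> carrier_vec (2*m)"
    using A k by (simp_all add: x_def l'_def)
  have "?f (transpose_mat A *\<^sub>v x) = transpose_mat (?F A) *\<^sub>v ?f x"
    using A by (simp add: frob.mult_mat_vec_hom[of _ "2*m" "2*m"] map_mat_transpose x_def)
  then have first: "?f (transpose_mat A *\<^sub>v x) \<bullet> l' = ?f x \<bullet> (?F A *\<^sub>v l')"
    using A fx by (simp add: transpose_vec_mult_scalar[of "?F A" "2*m" "2*m"] l'_def)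
  have last: "(k \<bullet> x + \<mu> * c) ^ ?p = ?f x \<bullet> ?f k + \<mu> ^ ?p * c ^ ?p"
    using k by (simp add: frob.hom_add frob.hom_mult frob.hom_scalar_prod comm_scalar_prod[of _ "2*m"] x_def)
  have "\<mu> ^ ?p = \<mu> * \<mu> ^ (?p - 1)"
    using prime_gt_0_nat[OF p] by (simp add: power_eq_if)
  then have mu: "\<mu> ^ ?p * a' = \<mu> * a"
    by (simp add: lam_last a_def a'_def)
  have "?f (transpose_mat A *\<^sub>v x) \<bullet> l' + (k \<bullet> x + \<mu> * c) ^ ?p * a'
      = ?f x \<bullet> (?F A *\<^sub>v l' + a' \<cdot>\<^sub>v ?f k) + (\<mu> ^ ?p * a') * c ^ ?p"
    unfolding first last using fx Fl fk by (simp add: scalar_prod_add_distrib[of _ "2*m"] algebra_simps)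
  also have "\<dots> = \<mu> * (?f x \<bullet> l + c ^ ?p * a)"
    unfolding mu lam_first[folded l_def l'_def a'_def, symmetric] using fx
    by (simp add: l_def algebra_simps)
  finally have key: "?f (transpose_mat A *\<^sub>v x) \<bullet> l' + (k \<bullet> x + \<mu> * c) ^ ?p * a'
      = \<mu> * (?f x \<bullet> l + c ^ ?p * a)" .
  show ?thesis
    unfolding heis_pmap_eq heis_map_smult_centre[OF A k]
    using A by (simp add: key[unfolded x_def c_def l_def l'_def a_def a'_def])
qed

lemma restricted_heis_iso_heis_map:
  fixes lam lam' :: "'a::field vec"
  assumes p: "prime CHAR('a)" and m: "m \<ge> 1"
    and A: "A \<in> carrier_mat (2*m) (2*m)" and "invertible_mat A" and k: "k \<in> carrier_vec (2*m)"
    and det: "(det A)^2 = \<mu>^(2*m)"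
    and sympl: "A * symp_J m * transpose_mat A = \<mu> \<cdot>\<^sub>m symp_J m"
    and lam_first: "\<mu> \<cdot>\<^sub>v vec_first lam (2*m) =
      map_mat (\<lambda>x. x ^ CHAR('a)) A *\<^sub>v vec_first lam' (2*m)
        + lam' $ (2*m) \<cdot>\<^sub>v map_vec (\<lambda>x. x ^ CHAR('a)) k"
    and lam_last: "lam $ (2*m) = \<mu> ^ (CHAR('a) - 1) * lam' $ (2*m)"
  shows "restricted_heis_iso m lam lam' (heis_map m A k \<mu>)"
proof -
  obtain B where B: "B \<in> carrier_mat (2*m) (2*m)"
    and AB: "A * B = 1\<^sub>m (2*m)" and BA: "B * A = 1\<^sub>m (2*m)"
    using invertible_matE[OF \<open>invertible_mat A\<close> A] by blast
  have "det A * det B = 1"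
    using det_mult[OF A B] AB by simp
  then have "\<mu> \<noteq> 0"
    using det m by (auto simp: power2_eq_square zero_power)
  then have "bij_betw (heis_map m A k \<mu>) (carrier_vec (2*m+1)) (carrier_vec (2*m+1))"
    unfolding bij_betw_def using inj_on_heis_map[OF A B AB] heis_map_image[OF A B BA] by blast
  then show ?thesis
    unfolding restricted_heis_iso_def
    using heis_map_add[OF A k] heis_map_smult[OF A k] heis_map_heis_bracket[OF A k sympl]
      heis_map_heis_pmap[OF p A k lam_first lam_last] by blast
qed

theorem theorem3p1:
  fixes m :: nat and lam lam' :: "'a::field vec"
  assumes "CHAR('a) > 2"
    and "m \<ge> 1"
    and "lam \<in> carrier_vec (2*m+1)" and "lam' \<in> carrier_vec (2*m+1)"
  shows "restricted_heis_isomorphic m lam lam' \<longleftrightarrow>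
    (\<exists>A k (\<mu>::'a). A \<in> carrier_mat (2*m) (2*m) \<and> invertible_mat A \<and>
       k \<in> carrier_vec (2*m) \<and> (det A)^2 = \<mu>^(2*m) \<and>
       A * symp_J m * transpose_mat A = \<mu> \<cdot>\<^sub>m symp_J m \<and>
       \<mu> \<cdot>\<^sub>v vec_first lam (2*m) =
         map_mat (\<lambda>x. x ^ CHAR('a)) A *\<^sub>v vec_first lam' (2*m)
         + lam' $ (2*m) \<cdot>\<^sub>v map_vec (\<lambda>x. x ^ CHAR('a)) k \<and>
       lam $ (2*m) = \<mu> ^ (CHAR('a) - 1) * lam' $ (2*m))"
proof -
  have p: "prime CHAR('a)"
    using \<open>CHAR('a) > 2\<close> by (intro prime_CHAR_semidom) simp
  show ?thesis
    unfolding restricted_heis_isomorphic_def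
    using restricted_heis_iso_imp_conditions[OF prime_gt_0_nat[OF p] \<open>m \<ge> 1\<close>]
      restricted_heis_iso_heis_map[OF p \<open>m \<ge> 1\<close>]
    by blast
qed

end
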